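(* Every binary orchard network is tree-based.
   Context: A (directed phylogenetic) network on a finite taxa set $X$ is a directed acyclic graph without parallel arcs whose nodes are of the following types: a unique root (indegree 0, outdegree 1); tree nodes (indegree 1, outdegree at least 2); reticulations (indegree at least 2, outdegree 1); leaves (indegree 1, outdegree 0), the leaves being bijectively labelled by $X$. A network is binary if every tree node and every reticulation has total degree (indegree plus outdegree) exactly 3. A tree is a network without reticulations. Orchard networks: An ordered pair of leaves $(x,y)$ is a cherry if $x$ and $y$ have a common parent; it is a reticulated cherry if the parent $p_x$ of $x$ is a reticulation and $p_x$ and $y$ have a common parent. Let $p_x,p_y$ be the parents of $x,y$. Reducing $(x,y)$ in a network $N$: if $(x,y)$ is a cherry, delete $x$ and suppress $p_x$ if it now has indegree 1 and outdegree 1; if $(x,y)$ is a reticulated cherry, delete the arc $(p_y,p_x)$ and suppress any resulting node of indegree 1 and outdegree 1; otherwise do nothing. (Suppressing a node $v$ with one parent $u$ and one child $w$ means deleting $v$ and adding the arc $(u,w)$.) For a sequence $S$ of ordered pairs, $NS$ denotes the result of reducing the pairs of $S$ in order. $N$ is orchard if there is a sequence $S$ such that $NS$ is a tree with exactly one leaf. Tree-based: A binary network $N$ is tree-based with base tree $T$ (a binary tree on the same taxa) if $N$ can be obtained from $T$ by: (i) replacing some arcs of $T$ by directed paths whose internal nodes (attachment points) have indegree 1 and outdegree 1; (ii) adding arcs (linking arcs) between attachment points so that no node has total degree greater than 3 and the graph stays acyclic; (iii) suppressing all attachment points not incident to a linking arc. *)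

theory Defs
  imports Main
begin

text \<open>A directed graph is a pair (V, E) of a vertex set and an arc set
  (a set of ordered pairs, hence no parallel arcs).  The leaves of a network
  are identified with their taxa (the labelling is the identity on leaves),
  so the taxa set X of a network G is exactly leaves G.\<close>

type_synonym 'v graph = "'v set \<times> ('v \<times> 'v) set"

definition indeg :: "'v graph \<Rightarrow> 'v \<Rightarrow> nat" where
  "indeg G v = card {u. (u, v) \<in> snd G}"

definition outdeg :: "'v graph \<Rightarrow> 'v \<Rightarrow> nat" where
  "outdeg G v = card {w. (v, w) \<in> snd G}"

definition is_root :: "'v graph \<Rightarrow> 'v \<Rightarrow> bool" where
  "is_root G v \<longleftrightarrow> v \<in> fst G \<and> indeg G v = 0 \<and> outdeg G v = 1"

definition is_tree_node :: "'v graph \<Rightarrow> 'v \<Rightarrow> bool" where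
  "is_tree_node G v \<longleftrightarrow> v \<in> fst G \<and> indeg G v = 1 \<and> outdeg G v \<ge> 2"

definition is_reticulation :: "'v graph \<Rightarrow> 'v \<Rightarrow> bool" where
  "is_reticulation G v \<longleftrightarrow> v \<in> fst G \<and> indeg G v \<ge> 2 \<and> outdeg G v = 1"

definition is_leaf :: "'v graph \<Rightarrow> 'v \<Rightarrow> bool" where
  "is_leaf G v \<longleftrightarrow> v \<in> fst G \<and> indeg G v = 1 \<and> outdeg G v = 0"

definition leaves :: "'v graph \<Rightarrow> 'v set" where
  "leaves G = {v \<in> fst G. is_leaf G v}"

definition network :: "'v graph \<Rightarrow> bool" where
  "network G \<longleftrightarrow> finite (fst G) \<and> snd G \<subseteq> fst G \<times> fst G \<and> acyclic (snd G)
     \<and> (\<exists>!r. is_root G r)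
     \<and> (\<forall>v \<in> fst G. is_root G v \<or> is_tree_node G v \<or> is_reticulation G v \<or> is_leaf G v)"

definition binary :: "'v graph \<Rightarrow> bool" where
  "binary G \<longleftrightarrow> (\<forall>v \<in> fst G. (is_tree_node G v \<longrightarrow> indeg G v + outdeg G v = 3)
                           \<and> (is_reticulation G v \<longrightarrow> indeg G v + outdeg G v = 3))"

definition is_tree :: "'v graph \<Rightarrow> bool" where
  "is_tree G \<longleftrightarrow> network G \<and> (\<forall>v. \<not> is_reticulation G v)"

definition suppress :: "'v \<Rightarrow> 'v graph \<Rightarrow> 'v graph" where
  "suppress v G = (fst G - {v},
     {(a, b) \<in> snd G. a \<noteq> v \<and> b \<noteq> v} \<union> {(u, w). (u, v) \<in> snd G \<and> (v, w) \<in> snd G})"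

definition suppress_if_11 :: "'v \<Rightarrow> 'v graph \<Rightarrow> 'v graph" where
  "suppress_if_11 v G = (if v \<in> fst G \<and> indeg G v = 1 \<and> outdeg G v = 1 then suppress v G else G)"

definition parent :: "'v graph \<Rightarrow> 'v \<Rightarrow> 'v" where
  "parent G x = (THE p. (p, x) \<in> snd G)"

definition cherry :: "'v graph \<Rightarrow> 'v \<Rightarrow> 'v \<Rightarrow> bool" where
  "cherry G x y \<longleftrightarrow> is_leaf G x \<and> is_leaf G y \<and> x \<noteq> y
     \<and> (\<exists>p. (p, x) \<in> snd G \<and> (p, y) \<in> snd G)"

definition ret_cherry :: "'v graph \<Rightarrow> 'v \<Rightarrow> 'v \<Rightarrow> bool" where
  "ret_cherry G x y \<longleftrightarrow> is_leaf G x \<and> is_leaf G y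
     \<and> is_reticulation G (parent G x)
     \<and> (\<exists>q. (q, parent G x) \<in> snd G \<and> (q, y) \<in> snd G)"

definition reduce_pair :: "'v \<times> 'v \<Rightarrow> 'v graph \<Rightarrow> 'v graph" where
  "reduce_pair xy G = (case xy of (x, y) \<Rightarrow>
     if cherry G x y then
       suppress_if_11 (parent G x) (fst G - {x}, {e \<in> snd G. snd e \<noteq> x})
     else if ret_cherry G x y then
       suppress_if_11 (parent G x)
         (suppress_if_11 (parent G y) (fst G, snd G - {(parent G y, parent G x)}))
     else G)"

definition reduce_seq :: "'v graph \<Rightarrow> ('v \<times> 'v) list \<Rightarrow> 'v graph" where
  "reduce_seq G S = fold reduce_pair S G"

definition orchard :: "'v graph \<Rightarrow> bool" where
  "orchard G \<longleftrightarrow> (\<exists>S. is_tree (reduce_seq G S) \<and> card (leaves (reduce_seq G S)) = 1)"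

text \<open>The base tree and the intermediate graphs live on the
  vertex type 'v + nat (leaves Inl x for taxa x, plenty of fresh names);
  the result must be isomorphic to N by an isomorphism fixing the taxa.\<close>

definition path_arcs :: "'w \<Rightarrow> 'w list \<Rightarrow> 'w \<Rightarrow> ('w \<times> 'w) set" where
  "path_arcs u ps w = set (zip (u # ps) (ps @ [w]))"

text \<open>Step (i): each arc e of T is replaced by the path through the attachment
  points P e (empty list = arc not subdivided).\<close>
definition valid_subdivision :: "'w graph \<Rightarrow> ('w \<times> 'w \<Rightarrow> 'w list) \<Rightarrow> bool" where
  "valid_subdivision T P \<longleftrightarrow>
     (\<forall>e \<in> snd T. distinct (P e) \<and> set (P e) \<inter> fst T = {})
     \<and> (\<forall>e \<in> snd T. \<forall>e' \<in> snd T. e \<noteq> e' \<longrightarrow> set (P e) \<inter> set (P e') = {})"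

definition attachment_points :: "'w graph \<Rightarrow> ('w \<times> 'w \<Rightarrow> 'w list) \<Rightarrow> 'w set" where
  "attachment_points T P = (\<Union>e \<in> snd T. set (P e))"

definition subdivide :: "'w graph \<Rightarrow> ('w \<times> 'w \<Rightarrow> 'w list) \<Rightarrow> 'w graph" where
  "subdivide T P = (fst T \<union> attachment_points T P,
                    \<Union>e \<in> snd T. path_arcs (fst e) (P e) (snd e))"

definition tree_based_with :: "'v graph \<Rightarrow> ('v + nat) graph \<Rightarrow> bool" where
  "tree_based_with N T \<longleftrightarrow>
     is_tree T \<and> binary T \<and> leaves T = Inl ` leaves N \<and>
     (\<exists>P L xs f.
        valid_subdivision T P \<and>
        \<comment> \<open>(ii) linking arcs between attachment points\<close>
        L \<subseteq> attachment_points T P \<times> attachment_points T P \<and>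
        L \<inter> snd (subdivide T P) = {} \<and>
        (let G2 = (fst (subdivide T P), snd (subdivide T P) \<union> L) in
          (\<forall>v \<in> fst G2. indeg G2 v + outdeg G2 v \<le> 3) \<and> acyclic (snd G2) \<and>
          \<comment> \<open>(iii) suppress the attachment points not incident to a linking arc\<close>
          distinct xs \<and>
          set xs = {a \<in> attachment_points T P. \<forall>b. (a, b) \<notin> L \<and> (b, a) \<notin> L} \<and>
          (let G3 = fold suppress xs G2 in
             bij_betw f (fst G3) (fst N) \<and>
             (\<forall>a \<in> fst G3. \<forall>b \<in> fst G3. (a, b) \<in> snd G3 \<longleftrightarrow> (f a, f b) \<in> snd N) \<and>
             (\<forall>x \<in> leaves N. f (Inl x) = x))))"

definition tree_based :: "'v graph \<Rightarrow> bool" where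
  "tree_based N \<longleftrightarrow> binary N \<and> network N \<and> (\<exists>T. tree_based_with N T)"

end

theory Submission
  imports Defs
begin

text \<open>
  Call a set L of arcs of a binary network admissible if every reticulation has exactly one
  incoming arc in L, every arc of L leaves a tree node, and no two arcs of L leave the same node.
  Reducing a cherry or a reticulated cherry yields a binary network in which all remaining
  vertices keep their degrees, and an admissible set of the reduced network lifts to the original
  one: unchanged for a cherry, enlarged by the deleted arc for a reticulated cherry.  Since a tree
  has the empty admissible set, every orchard network has an admissible set L.

  Conversely, in N without the arcs of L every vertex but the root has a unique parent and every
  endpoint of L a unique child.  Hence the maximal paths whose inner vertices are endpoints of L
  form a subdivision of a tree on the remaining vertices, with the same degrees as in N, and N is
  this subdivision plus the linking arcs L.
\<close>

lemma two_le_card: "finite S \<Longrightarrow> a \<in> S \<Longrightarrow> b \<in> S \<Longrightarrow> a \<noteq> b \<Longrightarrow> 2 \<le> card S"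
  by (metis card_2_iff card_mono empty_subsetI insert_subset)

lemma card_2_eq: "card S = 2 \<Longrightarrow> a \<in> S \<Longrightarrow> b \<in> S \<Longrightarrow> a \<noteq> b \<Longrightarrow> S = {a, b}"
  unfolding card_2_iff by auto

lemma acyclic_subset_trancl: "acyclic E \<Longrightarrow> E' \<subseteq> E\<^sup>+ \<Longrightarrow> acyclic E'"
  by (metis acyclic_def acyclic_subset trancl_id trans_trancl)

lemma acyclic_arc_neq: "acyclic E \<Longrightarrow> (a, b) \<in> E \<Longrightarrow> a \<noteq> b"
  unfolding acyclic_def by blast

lemma acyclic_arc_asym: "acyclic E \<Longrightarrow> (a, b) \<in> E \<Longrightarrow> (b, a) \<notin> E"
  unfolding acyclic_def by (meson r_into_trancl trancl_trans)

lemma card_2_doubletonE: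
  assumes "card S = 2" "a \<in> S" obtains b where "S = {a, b}" "a \<noteq> b"
proof -
  have "card (S - {a}) = 1" using assms by (simp add: card_Diff_singleton_if)
  then obtain b where b: "S - {a} = {b}" by (elim card_1_singletonE)
  then have "S = {a, b}" using assms(2) by blast
  moreover have "a \<noteq> b" using b by blast
  ultimately show ?thesis by (rule that)
qed

definition parents :: "'v graph \<Rightarrow> 'v \<Rightarrow> 'v set" where
  "parents G v = {u. (u, v) \<in> snd G}"

definition children :: "'v graph \<Rightarrow> 'v \<Rightarrow> 'v set" where
  "children G v = {w. (v, w) \<in> snd G}"

lemma indeg_eq_card_parents: "indeg G v = card (parents G v)"
  by (simp add: indeg_def parents_def)

lemma outdeg_eq_card_children: "outdeg G v = card (children G v)"
  by (simp add: outdeg_def children_def)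

definition finite_graph :: "'v graph \<Rightarrow> bool" where
  "finite_graph G \<longleftrightarrow> finite (fst G) \<and> snd G \<subseteq> fst G \<times> fst G"

lemma finite_graph_finite_arcs: "finite_graph G \<Longrightarrow> finite (snd G)"
  unfolding finite_graph_def by (meson finite_SigmaI finite_subset)

lemma finite_parents: "finite_graph G \<Longrightarrow> finite (parents G v)"
proof -
  assume "finite_graph G"
  moreover have "parents G v \<subseteq> fst ` snd G" unfolding parents_def by force
  ultimately show ?thesis using finite_graph_finite_arcs finite_subset by blast
qed

lemma finite_children: "finite_graph G \<Longrightarrow> finite (children G v)"
proof -
  assume "finite_graph G"
  moreover have "children G v \<subseteq> snd ` snd G" unfolding children_def by force
  ultimately show ?thesis using finite_graph_finite_arcs finite_subset by blast
qed

lemma parents_eq_singleton: "indeg G v = 1 \<Longrightarrow> (p, v) \<in> snd G \<Longrightarrow> parents G v = {p}"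
  unfolding indeg_eq_card_parents by (elim card_1_singletonE) (auto simp: parents_def set_eq_iff)

lemma children_eq_singleton: "outdeg G v = 1 \<Longrightarrow> (v, w) \<in> snd G \<Longrightarrow> children G v = {w}"
  unfolding outdeg_eq_card_children by (elim card_1_singletonE) (auto simp: children_def set_eq_iff)

lemma parent_eq: "parents G x = {p} \<Longrightarrow> parent G x = p"
  unfolding parent_def parents_def by auto

lemma network_finite_graph: "network G \<Longrightarrow> finite_graph G"
  unfolding network_def finite_graph_def by auto

lemma network_acyclic: "network G \<Longrightarrow> acyclic (snd G)"
  unfolding network_def by blast

lemma binary_network_degrees:
  assumes "network G" "binary G" "v \<in> fst G"
  shows "indeg G v = 0 \<and> outdeg G v = 1 \<or> indeg G v = 1 \<and> outdeg G v = 2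
       \<or> indeg G v = 2 \<and> outdeg G v = 1 \<or> indeg G v = 1 \<and> outdeg G v = 0"
proof -
  have "is_root G v \<or> is_tree_node G v \<or> is_reticulation G v \<or> is_leaf G v"
    using assms(1,3) unfolding network_def by blast
  moreover have "is_tree_node G v \<longrightarrow> indeg G v + outdeg G v = 3"
    "is_reticulation G v \<longrightarrow> indeg G v + outdeg G v = 3"
    using assms(2,3) unfolding binary_def by blast+
  ultimately show ?thesis
    unfolding is_root_def is_tree_node_def is_reticulation_def is_leaf_def by linarith
qed

lemma binary_network_outdeg_ge2:
  "network G \<Longrightarrow> binary G \<Longrightarrow> v \<in> fst G \<Longrightarrow> 2 \<le> outdeg G v \<Longrightarrow> indeg G v = 1 \<and> outdeg G v = 2"
  using binary_network_degrees[of G v] by linarith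

lemma binary_network_indeg_ge2:
  "network G \<Longrightarrow> binary G \<Longrightarrow> v \<in> fst G \<Longrightarrow> 2 \<le> indeg G v \<Longrightarrow> indeg G v = 2 \<and> outdeg G v = 1"
  using binary_network_degrees[of G v] by linarith

lemma network_binary_if_degrees_kept:
  assumes "network G" "binary G" "finite_graph G'" "acyclic (snd G')" "fst G' \<subseteq> fst G"
    and deg: "\<And>v. v \<in> fst G' \<Longrightarrow> indeg G' v = indeg G v \<and> outdeg G' v = outdeg G v"
    and root: "\<And>r. is_root G r \<Longrightarrow> r \<in> fst G'"
  shows "network G' \<and> binary G'"
proof -
  have kind: "is_root G' v = is_root G v" "is_tree_node G' v = is_tree_node G v"
    "is_reticulation G' v = is_reticulation G v" "is_leaf G' v = is_leaf G v"
    if "v \<in> fst G'" for v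
    using that deg[OF that] assms(5)
    unfolding is_root_def is_tree_node_def is_reticulation_def is_leaf_def by auto
  have "is_root G' v \<Longrightarrow> v \<in> fst G'" for v unfolding is_root_def by simp
  then have "\<exists>!r. is_root G' r" using assms(1) root kind(1) unfolding network_def by metis
  moreover have "\<forall>v \<in> fst G'. is_root G' v \<or> is_tree_node G' v \<or> is_reticulation G' v \<or> is_leaf G' v"
    using assms(1,5) kind unfolding network_def by blast
  ultimately have "network G'" using assms(3,4) unfolding network_def finite_graph_def by blast
  moreover have "binary G'" using assms(2,5) kind deg unfolding binary_def by (metis subsetD)
  ultimately show ?thesis by simp
qed

section \<open>Suppressing a node with one parent and one child\<close>

lemma fst_suppress [simp]: "fst (suppress v G) = fst G - {v}"
  by (simp add: suppress_def)

context
  fixes G :: "'v graph" and v u w :: 'v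
  assumes parents_v: "parents G v = {u}" and children_v: "children G v = {w}"
begin

lemma suppress_arcs: "snd (suppress v G) = {(a, b) \<in> snd G. a \<noteq> v \<and> b \<noteq> v} \<union> {(u, w)}"
  using parents_v children_v unfolding parents_def children_def suppress_def by auto

lemma parents_suppress:
  "t \<noteq> v \<Longrightarrow> parents (suppress v G) t = (if t = w then insert u (parents G t - {v}) else parents G t)"
  using parents_v children_v unfolding parents_def children_def suppress_def by auto

lemma children_suppress:
  "t \<noteq> v \<Longrightarrow> children (suppress v G) t = (if t = u then insert w (children G t - {v}) else children G t)"
  using parents_v children_v unfolding parents_def children_def suppress_def by auto

lemma suppress_if_11_eq_suppress: "finite_graph G \<Longrightarrow> v \<in> fst G \<Longrightarrow> suppress_if_11 v G = suppress v G"
  using parents_v children_v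
  unfolding suppress_if_11_def indeg_eq_card_parents outdeg_eq_card_children by simp

lemma acyclic_suppress: "acyclic (snd G) \<Longrightarrow> acyclic (snd (suppress v G))"
proof (erule acyclic_subset_trancl)
  have "(u, v) \<in> snd G" "(v, w) \<in> snd G"
    using parents_v children_v unfolding parents_def children_def by auto
  then show "snd (suppress v G) \<subseteq> (snd G)\<^sup>+" unfolding suppress_arcs by auto
qed

context
  assumes finite: "finite_graph G" and acyclic: "acyclic (snd G)"
begin

lemma finite_graph_suppress: "finite_graph (suppress v G)"
proof -
  have "(u, v) \<in> snd G" "(v, w) \<in> snd G"
    using parents_v children_v unfolding parents_def children_def by auto
  with finite acyclic have "u \<in> fst G - {v}" "w \<in> fst G - {v}"
    unfolding finite_graph_def by (auto dest: acyclic_arc_neq)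
  with finite show ?thesis unfolding finite_graph_def suppress_arcs by auto
qed

lemma degrees_suppress:
  assumes "(u, w) \<notin> snd G" "t \<noteq> v"
  shows "indeg (suppress v G) t = indeg G t" "outdeg (suppress v G) t = outdeg G t"
proof -
  have uv: "(u, v) \<in> snd G" "(v, w) \<in> snd G"
    using parents_v children_v unfolding parents_def children_def by auto
  show "indeg (suppress v G) t = indeg G t"
  proof (cases "t = w")
    case True
    with assms uv have "v \<in> parents G t" "u \<notin> parents G t" unfolding parents_def by auto
    with True assms(2) finite_parents[OF finite] show ?thesis
      unfolding indeg_eq_card_parents parents_suppress[OF assms(2)]
      by (simp add: card_insert_if) (metis Suc_pred card_gt_0_iff empty_iff)
  qed (simp add: indeg_eq_card_parents parents_suppress[OF assms(2)])
  show "outdeg (suppress v G) t = outdeg G t"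
  proof (cases "t = u")
    case True
    with assms uv have "v \<in> children G t" "w \<notin> children G t" unfolding children_def by auto
    with True assms(2) finite_children[OF finite] show ?thesis
      unfolding outdeg_eq_card_children children_suppress[OF assms(2)]
      by (simp add: card_insert_if) (metis Suc_pred card_gt_0_iff empty_iff)
  qed (simp add: outdeg_eq_card_children children_suppress[OF assms(2)])
qed

end

end

section \<open>Admissible sets of linking arcs\<close>

definition admissible :: "'v graph \<Rightarrow> ('v \<times> 'v) set \<Rightarrow> bool" where
  "admissible N L \<longleftrightarrow> L \<subseteq> snd N
     \<and> (\<forall>v \<in> fst N. 2 \<le> indeg N v \<longrightarrow> (\<exists>!u. (u, v) \<in> L))
     \<and> (\<forall>u v. (u, v) \<in> L \<longrightarrow> 2 \<le> indeg N v \<and> 2 \<le> outdeg N u \<and> (\<forall>w. (u, w) \<in> L \<longrightarrow> w = v))"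

lemma admissible_arcs: "admissible N L \<Longrightarrow> L \<subseteq> snd N"
  unfolding admissible_def by (rule conjunct1)

lemma admissible_reticulation:
  assumes "admissible N L" "v \<in> fst N" "2 \<le> indeg N v" shows "\<exists>!u. (u, v) \<in> L"
  by (rule assms(1)[unfolded admissible_def, THEN conjunct2, THEN conjunct1, rule_format, OF assms(2,3)])

lemma admissible_link:
  assumes "admissible N L" "(u, v) \<in> L"
  shows "2 \<le> indeg N v" "2 \<le> outdeg N u" "(u, w) \<in> L \<Longrightarrow> w = v"
  using assms(1)[unfolded admissible_def, THEN conjunct2, THEN conjunct2, rule_format, OF assms(2)]
  by blast+

lemma admissible_empty_if_tree:
  assumes "is_tree G" "binary G" shows "admissible G {}"
proof -
  have "\<not> 2 \<le> indeg G v" if "v \<in> fst G" for v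
    using assms binary_network_indeg_ge2[of G v] that unfolding is_tree_def is_reticulation_def by auto
  then show ?thesis unfolding admissible_def by auto
qed

text \<open>The last condition ensures that all linking arcs of an admissible set of the reduct are
  arcs of G.\<close>

definition degree_preserving_reduct :: "'v graph \<Rightarrow> 'v graph \<Rightarrow> bool" where
  "degree_preserving_reduct G G' \<longleftrightarrow> finite_graph G' \<and> acyclic (snd G') \<and> fst G' \<subseteq> fst G
     \<and> (\<forall>v \<in> fst G'. indeg G' v = indeg G v \<and> outdeg G' v = outdeg G v)
     \<and> (\<forall>u v. (u, v) \<in> snd G' - snd G \<longrightarrow> indeg G' v < 2)"

lemma network_binary_reduct:
  assumes "network G" "binary G" and R: "degree_preserving_reduct G G'"
    and removed: "\<forall>v \<in> fst G - fst G'. indeg G v \<noteq> 0"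
  shows "network G' \<and> binary G'"
proof (rule network_binary_if_degrees_kept[OF assms(1,2)])
  show "r \<in> fst G'" if "is_root G r" for r
    using that removed unfolding is_root_def by blast
qed (use R in \<open>auto simp: degree_preserving_reduct_def\<close>)

lemma degree_preserving_reduct_suppress:
  assumes G1: "finite_graph G1" "acyclic (snd G1)" "fst G1 \<subseteq> fst G"
    and v: "parents G1 v = {u}" "children G1 v = {w}" "(u, w) \<notin> snd G1"
    and deg: "\<forall>t \<in> fst G1 - {v}. indeg G1 t = indeg G t \<and> outdeg G1 t = outdeg G t"
    and new: "\<forall>a b. (a, b) \<in> snd G1 - snd G \<longrightarrow> indeg G1 b < 2"
    and "indeg G w < 2"
  shows "degree_preserving_reduct G (suppress v G1)"
  unfolding degree_preserving_reduct_def
proof (intro conjI)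
  note deg_suppress = degrees_suppress[OF v(1,2) G1(1,2) v(3)]
  have "(v, w) \<in> snd G1" using v(2) unfolding children_def by auto
  with G1 have "w \<in> fst G1 - {v}" unfolding finite_graph_def by (auto dest: acyclic_arc_neq)
  show "finite_graph (suppress v G1)" "acyclic (snd (suppress v G1))"
    using finite_graph_suppress[OF v(1,2) G1(1,2)] acyclic_suppress[OF v(1,2) G1(2)] .
  show "fst (suppress v G1) \<subseteq> fst G" using G1(3) by auto
  show "\<forall>t \<in> fst (suppress v G1). indeg (suppress v G1) t = indeg G t
      \<and> outdeg (suppress v G1) t = outdeg G t"
    using deg deg_suppress by auto
  show "\<forall>a b. (a, b) \<in> snd (suppress v G1) - snd G \<longrightarrow> indeg (suppress v G1) b < 2"
  proof (intro allI impI)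
    fix a b assume ab: "(a, b) \<in> snd (suppress v G1) - snd G"
    then consider "(a, b) = (u, w)" | "(a, b) \<in> snd G1 - snd G" "b \<noteq> v"
      unfolding suppress_arcs[OF v(1,2)] by auto
    then show "indeg (suppress v G1) b < 2"
    proof cases
      case 1
      with \<open>w \<in> fst G1 - {v}\<close> deg deg_suppress \<open>indeg G w < 2\<close> show ?thesis by auto
    next
      case 2
      with new deg_suppress show ?thesis by auto
    qed
  qed
qed

lemma admissible_reduct_arcs:
  assumes R: "degree_preserving_reduct G G'" and A: "admissible G' L'"
  shows "L' \<subseteq> snd G \<inter> (fst G' \<times> fst G')"
proof
  fix e assume "e \<in> L'"
  then obtain u v where e: "e = (u, v)" "(u, v) \<in> L'" by (cases e) auto
  with admissible_arcs[OF A] admissible_link(1)[OF A]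
  have uv: "(u, v) \<in> snd G'" "2 \<le> indeg G' v" by blast+
  with R have "(u, v) \<in> snd G" unfolding degree_preserving_reduct_def by (meson DiffI leD)
  with uv R show "e \<in> snd G \<inter> (fst G' \<times> fst G')"
    unfolding e(1) degree_preserving_reduct_def finite_graph_def by auto
qed

lemma admissible_of_reduct:
  assumes R: "degree_preserving_reduct G G'" and A: "admissible G' L'"
    and removed: "\<forall>v \<in> fst G - fst G'. indeg G v < 2"
  shows "admissible G L'"
proof -
  have deg: "indeg G' v = indeg G v" "outdeg G' v = outdeg G v" if "v \<in> fst G'" for v
    using R that unfolding degree_preserving_reduct_def by auto
  note arcs = admissible_reduct_arcs[OF R A]
  show ?thesis unfolding admissible_def
  proof (intro conjI allI impI ballI)
    show "L' \<subseteq> snd G" using arcs by blast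
  next
    fix v assume v: "v \<in> fst G" "2 \<le> indeg G v"
    with removed have "v \<in> fst G'" by (meson DiffI not_le)
    with v(2) show "\<exists>!u. (u, v) \<in> L'" using admissible_reticulation[OF A] by (simp add: deg)
  next
    fix u v assume uv: "(u, v) \<in> L'"
    with arcs have "u \<in> fst G'" "v \<in> fst G'" by auto
    with admissible_link(1,2)[OF A uv] show "2 \<le> indeg G v" "2 \<le> outdeg G u" by (simp_all add: deg)
    show "(u, w) \<in> L' \<Longrightarrow> w = v" for w using admissible_link(3)[OF A uv] .
  qed
qed

lemma admissible_insert_of_reduct:
  assumes R: "degree_preserving_reduct G G'" and A: "admissible G' L'"
    and ab: "(a, b) \<in> snd G" "a \<notin> fst G'" "b \<notin> fst G'" "2 \<le> outdeg G a" "2 \<le> indeg G b"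
    and removed: "\<forall>v \<in> fst G - fst G' - {b}. indeg G v < 2"
  shows "admissible G (insert (a, b) L')"
proof -
  have deg: "indeg G' v = indeg G v" "outdeg G' v = outdeg G v" if "v \<in> fst G'" for v
    using R that unfolding degree_preserving_reduct_def by auto
  note arcs = admissible_reduct_arcs[OF R A]
  show ?thesis unfolding admissible_def
  proof (intro conjI allI impI ballI)
    show "insert (a, b) L' \<subseteq> snd G" using arcs ab by blast
  next
    fix v assume v: "v \<in> fst G" "2 \<le> indeg G v"
    show "\<exists>!u. (u, v) \<in> insert (a, b) L'"
    proof (cases "v = b")
      case False
      with v removed have "v \<in> fst G'" by (meson DiffI insertE not_le singletonD)
      with v(2) have "\<exists>!u. (u, v) \<in> L'" using admissible_reticulation[OF A] by (simp add: deg)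
      with False show ?thesis by simp
    next
      case True
      have "(u, b) \<notin> L'" for u using arcs ab(3) by blast
      with True show ?thesis by (intro ex1I[of _ a]) auto
    qed
  next
    fix u v assume uv: "(u, v) \<in> insert (a, b) L'"
    have "2 \<le> indeg G v \<and> 2 \<le> outdeg G u \<and> (\<forall>w. (u, w) \<in> insert (a, b) L' \<longrightarrow> w = v)"
    proof (cases "(u, v) = (a, b)")
      case True
      moreover have "\<forall>w. (a, w) \<notin> L'" using arcs ab(2) by blast
      ultimately show ?thesis using ab(4,5) by simp
    next
      case False
      with uv have uv': "(u, v) \<in> L'" by auto
      with arcs ab(2) have "u \<in> fst G'" "v \<in> fst G'" "u \<noteq> a" by auto
      with admissible_link(1,2)[OF A uv'] have "2 \<le> indeg G v" "2 \<le> outdeg G u" by (simp_all add: deg)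
      moreover have "\<forall>w. (u, w) \<in> insert (a, b) L' \<longrightarrow> w = v"
        using admissible_link(3)[OF A uv'] \<open>u \<noteq> a\<close> by blast
      ultimately show ?thesis by blast
    qed
    then show "2 \<le> indeg G v" "2 \<le> outdeg G u" "(u, w) \<in> insert (a, b) L' \<Longrightarrow> w = v" for w
      by blast+
  qed
qed

section \<open>Reducing cherries and reticulated cherries\<close>

lemma children_of_leaf: "network G \<Longrightarrow> is_leaf G x \<Longrightarrow> children G x = {}"
  using finite_children[OF network_finite_graph] unfolding is_leaf_def outdeg_eq_card_children
  by fastforce

lemma cherry_common_parent:
  assumes N: "network G" and B: "binary G" and C: "cherry G x y"
  obtains p g where "parents G x = {p}" "parents G y = {p}" "children G p = {x, y}"
    "parents G p = {g}" "x \<noteq> y"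
proof -
  obtain p where px: "(p, x) \<in> snd G" and py: "(p, y) \<in> snd G" and "x \<noteq> y"
    and "indeg G x = 1" "indeg G y = 1"
    using C unfolding cherry_def is_leaf_def by blast
  then have par: "parents G x = {p}" "parents G y = {p}" by (simp_all add: parents_eq_singleton)
  have fin: "finite (children G p)" using finite_children[OF network_finite_graph[OF N]] .
  have "p \<in> fst G" using px network_finite_graph[OF N] unfolding finite_graph_def by auto
  moreover have xy: "x \<in> children G p" "y \<in> children G p" using px py unfolding children_def by auto
  ultimately have "indeg G p = 1" "outdeg G p = 2"
    using binary_network_outdeg_ge2[OF N B] two_le_card[OF fin xy \<open>x \<noteq> y\<close>]
    unfolding outdeg_eq_card_children by auto
  then have cp: "children G p = {x, y}"
    using card_2_eq[OF _ xy \<open>x \<noteq> y\<close>] unfolding outdeg_eq_card_children by simp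
  obtain g where "parents G p = {g}"
    using \<open>indeg G p = 1\<close> unfolding indeg_eq_card_parents by (elim card_1_singletonE)
  from that[OF par cp this \<open>x \<noteq> y\<close>] show ?thesis .
qed

lemma reduct_cherry:
  assumes N: "network G" and B: "binary G" and C: "cherry G x y"
  shows "degree_preserving_reduct G (reduce_pair (x, y) G)"
    and "\<forall>v \<in> fst G - fst (reduce_pair (x, y) G). indeg G v = 1"
proof -
  obtain p g where px: "parents G x = {p}" and py: "parents G y = {p}"
    and cp: "children G p = {x, y}" and pp: "parents G p = {g}" and "x \<noteq> y"
    using cherry_common_parent[OF N B C] .
  have fg: "finite_graph G" and ac: "acyclic (snd G)"
    using N by (simp_all add: network_finite_graph network_acyclic)
  have arcs: "(p, x) \<in> snd G" "(p, y) \<in> snd G" "(g, p) \<in> snd G"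
    using px py pp unfolding parents_def by auto
  have "p \<noteq> x" "g \<noteq> p" using arcs ac by (auto dest: acyclic_arc_neq)
  have cx: "children G x = {}" using children_of_leaf[OF N] C unfolding cherry_def by blast
  define G1 where "G1 = (fst G - {x}, {e \<in> snd G. snd e \<noteq> x})"
  have fg1: "finite_graph G1" using fg cx unfolding G1_def finite_graph_def children_def by auto
  have ac1: "acyclic (snd G1)" using acyclic_subset[OF ac] unfolding G1_def by auto
  have p1: "parents G1 p = {g}" "children G1 p = {y}"
    using pp cp \<open>p \<noteq> x\<close> \<open>x \<noteq> y\<close> unfolding G1_def parents_def children_def by auto
  have same1: "parents G1 t = parents G t" "children G1 t = children G t" if "t \<noteq> x" "t \<noteq> p" for t
    using that px unfolding G1_def parents_def children_def by auto
  have "(g, y) \<notin> snd G1" using py \<open>g \<noteq> p\<close> unfolding G1_def parents_def by auto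
  have "p \<in> fst G1" using arcs fg \<open>p \<noteq> x\<close> unfolding G1_def finite_graph_def by auto
  have G': "reduce_pair (x, y) G = suppress p G1"
    using C suppress_if_11_eq_suppress[OF p1 fg1 \<open>p \<in> fst G1\<close>]
    unfolding reduce_pair_def G1_def by (simp add: parent_eq[OF px])
  have fst': "fst (suppress p G1) = fst G - {x, p}" unfolding G1_def by auto
  show "degree_preserving_reduct G (reduce_pair (x, y) G)"
    unfolding G'
  proof (rule degree_preserving_reduct_suppress[OF fg1 ac1 _ p1 \<open>(g, y) \<notin> snd G1\<close>])
    show "fst G1 \<subseteq> fst G" unfolding G1_def by auto
    show "\<forall>t \<in> fst G1 - {p}. indeg G1 t = indeg G t \<and> outdeg G1 t = outdeg G t"
      using same1 unfolding G1_def indeg_eq_card_parents outdeg_eq_card_children by auto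
    show "\<forall>a b. (a, b) \<in> snd G1 - snd G \<longrightarrow> indeg G1 b < 2" unfolding G1_def by auto
    show "indeg G y < 2" using py unfolding indeg_eq_card_parents by simp
  qed
  show "\<forall>v \<in> fst G - fst (reduce_pair (x, y) G). indeg G v = 1"
    using G' fst' px pp unfolding indeg_eq_card_parents by auto
qed

lemma ret_cherry_parents:
  assumes N: "network G" and B: "binary G" and C: "ret_cherry G x y"
  obtains p q z g where "parents G x = {p}" "children G p = {x}" "parents G p = {q, z}" "q \<noteq> z"
    "parents G y = {q}" "children G q = {p, y}" "parents G q = {g}"
proof -
  define p where "p = parent G x"
  have lx: "is_leaf G x" and ly: "is_leaf G y" and rp: "is_reticulation G p"
    using C unfolding ret_cherry_def p_def by blast+
  obtain q where qp: "(q, p) \<in> snd G" and qy: "(q, y) \<in> snd G"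
    using C unfolding ret_cherry_def p_def by blast
  have fin: "finite (children G q)" using finite_children[OF network_finite_graph[OF N]] .
  have "card (parents G x) = 1" using lx unfolding is_leaf_def indeg_eq_card_parents by simp
  then obtain p0 where "parents G x = {p0}" by (rule card_1_singletonE)
  then have px: "parents G x = {p}" unfolding p_def by (simp add: parent_eq)
  have py: "parents G y = {q}" using ly qy by (simp add: is_leaf_def parents_eq_singleton)
  have "indeg G p = 2" "outdeg G p = 1"
    using binary_network_indeg_ge2[OF N B] rp unfolding is_reticulation_def by auto
  moreover have "(p, x) \<in> snd G" using px unfolding parents_def by auto
  ultimately have cp: "children G p = {x}" by (simp add: children_eq_singleton)
  have "q \<in> parents G p" using qp unfolding parents_def by simp
  moreover have "card (parents G p) = 2" using \<open>indeg G p = 2\<close> by (simp add: indeg_eq_card_parents)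
  ultimately obtain z where pp: "parents G p = {q, z}" "q \<noteq> z" by (metis card_2_doubletonE)
  have "p \<noteq> y" using \<open>indeg G p = 2\<close> ly unfolding is_leaf_def by auto
  have "q \<in> fst G" using qp network_finite_graph[OF N] unfolding finite_graph_def by auto
  moreover have py_in: "p \<in> children G q" "y \<in> children G q" using qp qy unfolding children_def by auto
  ultimately have "indeg G q = 1" "outdeg G q = 2"
    using binary_network_outdeg_ge2[OF N B] two_le_card[OF fin py_in \<open>p \<noteq> y\<close>]
    unfolding outdeg_eq_card_children by auto
  then have cq: "children G q = {p, y}"
    using card_2_eq[OF _ py_in \<open>p \<noteq> y\<close>] unfolding outdeg_eq_card_children by simp
  obtain g where "parents G q = {g}"
    using \<open>indeg G q = 1\<close> unfolding indeg_eq_card_parents by (elim card_1_singletonE)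
  from that[OF px cp pp py cq this] show ?thesis .
qed

lemma suppress_after_arc_deletion:
  assumes fg: "finite_graph G" and ac: "acyclic (snd G)"
    and q: "parents G q = {g}" "children G q = {p, y}" "p \<noteq> y" "(g, y) \<notin> snd G"
  defines "G' \<equiv> suppress q (fst G, snd G - {(q, p)})"
  shows "suppress_if_11 q (fst G, snd G - {(q, p)}) = G'"
    and "finite_graph G'" "acyclic (snd G')" "fst G' = fst G - {q}" "snd G' - snd G \<subseteq> {(g, y)}"
    and "t \<noteq> q \<Longrightarrow> t \<noteq> p \<Longrightarrow> indeg G' t = indeg G t \<and> outdeg G' t = outdeg G t"
    and "parents G' p = parents G p - {q}" "children G' p = children G p"
proof -
  define G1 where "G1 = (fst G, snd G - {(q, p)})"
  have arcs: "(g, q) \<in> snd G" "(q, p) \<in> snd G" using q unfolding parents_def children_def by auto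
  then have "q \<noteq> p" "g \<noteq> p" using ac by (auto dest: acyclic_arc_neq acyclic_arc_asym)
  have fg1: "finite_graph G1" using fg unfolding G1_def finite_graph_def by auto
  have ac1: "acyclic (snd G1)" using acyclic_subset[OF ac] unfolding G1_def by auto
  have q1: "parents G1 q = {g}" "children G1 q = {y}"
    using q \<open>q \<noteq> p\<close> unfolding G1_def parents_def children_def by auto
  have same1: "parents G1 t = parents G t" "children G1 t = children G t" if "t \<noteq> p" "t \<noteq> q" for t
    using that unfolding G1_def parents_def children_def by auto
  have "(g, y) \<notin> snd G1" using q(4) unfolding G1_def by simp
  note deg1 = degrees_suppress[OF q1 fg1 ac1 this]
  have "q \<in> fst G1" using arcs fg unfolding G1_def finite_graph_def by auto
  with suppress_if_11_eq_suppress[OF q1 fg1] show "suppress_if_11 q (fst G, snd G - {(q, p)}) = G'"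
    unfolding G'_def G1_def by simp
  show "finite_graph G'" "acyclic (snd G')" "fst G' = fst G - {q}"
    unfolding G'_def G1_def[symmetric]
    using finite_graph_suppress[OF q1 fg1 ac1] acyclic_suppress[OF q1 ac1] by (simp_all add: G1_def)
  show "snd G' - snd G \<subseteq> {(g, y)}"
    using suppress_arcs[OF q1] unfolding G'_def G1_def by auto
  show "indeg G' t = indeg G t \<and> outdeg G' t = outdeg G t" if "t \<noteq> q" "t \<noteq> p" for t
    using deg1[OF that(1)] same1[OF that(2,1)]
    unfolding G'_def G1_def[symmetric] indeg_eq_card_parents outdeg_eq_card_children by simp
  show "parents G' p = parents G p - {q}" "children G' p = children G p"
    using parents_suppress[OF q1] children_suppress[OF q1] \<open>q \<noteq> p\<close> \<open>g \<noteq> p\<close> q(3)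
    unfolding G'_def G1_def[symmetric] by (auto simp: G1_def parents_def children_def)
qed

lemma reduct_ret_cherry:
  assumes N: "network G" and B: "binary G" and C: "ret_cherry G x y"
  obtains q p where "degree_preserving_reduct G (reduce_pair (x, y) G)"
    "fst G - fst (reduce_pair (x, y) G) = {q, p}" "(q, p) \<in> snd G"
    "indeg G q = 1" "outdeg G q = 2" "indeg G p = 2"
proof -
  obtain p q z g where px: "parents G x = {p}" and cp: "children G p = {x}"
    and pp: "parents G p = {q, z}" "q \<noteq> z" and py: "parents G y = {q}"
    and cq: "children G q = {p, y}" and pq: "parents G q = {g}"
    using ret_cherry_parents[OF N B C] .
  have fg: "finite_graph G" and ac: "acyclic (snd G)"
    using N by (simp_all add: network_finite_graph network_acyclic)
  have arcs: "(p, x) \<in> snd G" "(q, p) \<in> snd G" "(q, y) \<in> snd G" "(g, q) \<in> snd G"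
    using px pp py pq unfolding parents_def by auto
  have "z \<in> parents G p" using pp by simp
  then have "(z, p) \<in> snd G" unfolding parents_def by simp
  have "p \<noteq> q" "p \<noteq> x" "g \<noteq> q" "q \<noteq> y" "z \<noteq> p"
    using arcs \<open>(z, p) \<in> snd G\<close> ac by (auto dest: acyclic_arc_neq)
  have "p \<noteq> y"
  proof
    assume "p = y"
    with pp py have "z \<in> {q}" by blast
    with \<open>q \<noteq> z\<close> show False by simp
  qed
  have "x \<noteq> y" using px py \<open>p \<noteq> q\<close> by auto
  have not_cherry: "\<not> cherry G x y"
  proof
    assume "cherry G x y"
    then obtain r where "r \<in> parents G x" "r \<in> parents G y" unfolding cherry_def parents_def by blast
    with px py \<open>p \<noteq> q\<close> show False by simp
  qed
  have "(g, y) \<notin> snd G" using py \<open>g \<noteq> q\<close> unfolding parents_def by auto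
  define G2 where "G2 = suppress q (fst G, snd G - {(q, p)})"
  note G2 = suppress_after_arc_deletion[OF fg ac pq cq \<open>p \<noteq> y\<close> \<open>(g, y) \<notin> snd G\<close>, folded G2_def]
  have p2: "parents G2 p = {z}" "children G2 p = {x}" using G2(7,8) pp cp \<open>q \<noteq> z\<close> by auto
  have "(z, x) \<notin> snd G" using px \<open>z \<noteq> p\<close> unfolding parents_def by auto
  with G2(5) \<open>x \<noteq> y\<close> have "(z, x) \<notin> snd G2" by auto
  have "q \<in> fst G" "p \<in> fst G2" using arcs fg G2(4) \<open>p \<noteq> q\<close> unfolding finite_graph_def by auto
  have "reduce_pair (x, y) G = suppress_if_11 p (suppress_if_11 q (fst G, snd G - {(q, p)}))"
    using C not_cherry unfolding reduce_pair_def by (simp add: parent_eq[OF px] parent_eq[OF py])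
  also have "\<dots> = suppress p G2"
    unfolding G2(1) using suppress_if_11_eq_suppress[OF p2 G2(2) \<open>p \<in> fst G2\<close>] .
  finally have G': "reduce_pair (x, y) G = suppress p G2" .
  have "degree_preserving_reduct G (suppress p G2)"
  proof (rule degree_preserving_reduct_suppress[OF G2(2,3) _ p2 \<open>(z, x) \<notin> snd G2\<close>])
    show "fst G2 \<subseteq> fst G" using G2(4) by auto
    show "\<forall>t \<in> fst G2 - {p}. indeg G2 t = indeg G t \<and> outdeg G2 t = outdeg G t"
      using G2(4,6) by auto
    have "indeg G2 y = 1" using G2(6)[of y] py \<open>p \<noteq> y\<close> \<open>q \<noteq> y\<close>
      unfolding indeg_eq_card_parents by simp
    with G2(5) show "\<forall>a b. (a, b) \<in> snd G2 - snd G \<longrightarrow> indeg G2 b < 2" by auto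
    show "indeg G x < 2" using px unfolding indeg_eq_card_parents by simp
  qed
  moreover have "fst G - fst (suppress p G2) = {q, p}" using G2(4) \<open>q \<in> fst G\<close> \<open>p \<in> fst G2\<close> by auto
  moreover have "indeg G q = 1" "outdeg G q = 2" "indeg G p = 2"
    using pq cq pp \<open>p \<noteq> y\<close> \<open>q \<noteq> z\<close>
    unfolding indeg_eq_card_parents outdeg_eq_card_children by simp_all
  ultimately show ?thesis using that[OF _ _ arcs(2)] unfolding G' by blast
qed

lemma reduce_pair_cases:
  obtains "cherry G x y" | "ret_cherry G x y" | "reduce_pair (x, y) G = G"
  by (cases "cherry G x y"; cases "ret_cherry G x y") (simp_all add: reduce_pair_def)

lemma reduce_pair_network_binary:
  assumes N: "network G" and B: "binary G"
  shows "network (reduce_pair s G) \<and> binary (reduce_pair s G)"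
proof -
  obtain x y where s: "s = (x, y)" by fastforce
  show ?thesis
  proof (cases rule: reduce_pair_cases[of G x y])
    case 1
    with reduct_cherry[OF N B] show ?thesis
      unfolding s by (intro network_binary_reduct[OF N B]) auto
  next
    case 2
    then obtain q p where "degree_preserving_reduct G (reduce_pair s G)"
      "fst G - fst (reduce_pair s G) = {q, p}" "indeg G q = 1" "indeg G p = 2"
      unfolding s by (elim reduct_ret_cherry[OF N B]) auto
    then show ?thesis by (intro network_binary_reduct[OF N B]) auto
  qed (simp add: s N B)
qed

lemma admissible_of_reduce_pair:
  assumes N: "network G" and B: "binary G" and A: "admissible (reduce_pair s G) L'"
  shows "\<exists>L. admissible G L"
proof -
  obtain x y where s: "s = (x, y)" by fastforce
  show ?thesis
  proof (cases rule: reduce_pair_cases[of G x y])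
    case 1
    with reduct_cherry[OF N B] have "admissible G L'"
      unfolding s by (intro admissible_of_reduct[OF _ A[unfolded s]]) auto
    then show ?thesis ..
  next
    case 2
    then obtain q p where R: "degree_preserving_reduct G (reduce_pair s G)"
      and removed: "fst G - fst (reduce_pair s G) = {q, p}" and "(q, p) \<in> snd G"
      and "indeg G q = 1" "outdeg G q = 2" "indeg G p = 2"
      unfolding s by (elim reduct_ret_cherry[OF N B]) auto
    moreover have "q \<notin> fst (reduce_pair s G)" "p \<notin> fst (reduce_pair s G)" using removed by auto
    ultimately have "admissible G (insert (q, p) L')"
      by (intro admissible_insert_of_reduct[OF R A]) auto
    then show ?thesis ..
  qed (use A s in auto)
qed

lemma admissible_if_reduces_to_tree:
  "network G \<Longrightarrow> binary G \<Longrightarrow> is_tree (reduce_seq G S) \<Longrightarrow> \<exists>L. admissible G L"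
proof (induction S arbitrary: G)
  case Nil
  then have "is_tree G" "binary G" unfolding reduce_seq_def by simp_all
  then show ?case using admissible_empty_if_tree by blast
next
  case (Cons s S)
  have "reduce_seq G (s # S) = reduce_seq (reduce_pair s G) S" unfolding reduce_seq_def by simp
  with Cons reduce_pair_network_binary obtain L' where "admissible (reduce_pair s G) L'" by metis
  with Cons.prems show ?case by (elim admissible_of_reduce_pair)
qed

lemma orchard_admissible: "network N \<Longrightarrow> binary N \<Longrightarrow> orchard N \<Longrightarrow> \<exists>L. admissible N L"
  unfolding orchard_def using admissible_if_reduces_to_tree by blast

lemma path_arcs_Nil [simp]: "path_arcs u [] w = {(u, w)}"
  unfolding path_arcs_def by simp

lemma path_arcs_Cons [simp]: "path_arcs u (p # ps) w = insert (u, p) (path_arcs p ps w)"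
  unfolding path_arcs_def by simp

lemma path_arcs_append: "path_arcs u (ps @ m # qs) w = path_arcs u ps m \<union> path_arcs m qs w"
  by (induction ps arbitrary: u) auto

lemma path_arcs_snoc: "path_arcs u (ps @ [p]) w = insert (p, w) (path_arcs u ps p)"
  using path_arcs_append[of u ps p "[]" w] by auto

lemma path_arcs_first: "(u, hd (ps @ [w])) \<in> path_arcs u ps w"
  by (cases ps) auto

lemma path_arcs_last: "(last (u # ps), w) \<in> path_arcs u ps w"
  by (induction ps arbitrary: u) auto

lemma path_arcs_trancl: "path_arcs u ps w \<subseteq> E \<Longrightarrow> z \<in> set ps \<union> {w} \<Longrightarrow> (u, z) \<in> E\<^sup>+"
proof (induction ps arbitrary: u)
  case (Cons p ps)
  then show ?case by (cases "z = p") (auto intro: trancl_into_trancl2)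
qed auto

lemma distinct_path: "acyclic E \<Longrightarrow> path_arcs u ps w \<subseteq> E \<Longrightarrow> distinct (u # ps @ [w])"
proof (induction ps arbitrary: u)
  case Nil
  then show ?case by (auto dest: acyclic_arc_neq)
next
  case (Cons p ps)
  have "(u, u) \<notin> E\<^sup>+" using Cons.prems(1) unfolding acyclic_def by blast
  with path_arcs_trancl[OF Cons.prems(2)] have "u \<notin> set (p # ps @ [w])" by auto
  moreover have "path_arcs p ps w \<subseteq> E" using Cons.prems(2) by simp
  then have "distinct (p # ps @ [w])" by (rule Cons.IH[OF Cons.prems(1)])
  ultimately show ?case by simp
qed

lemma path_arcs_map: "path_arcs (h u) (map h ps) (h w) = map_prod h h ` path_arcs u ps w"
  by (induction ps arbitrary: u) auto

definition gmap :: "('a \<Rightarrow> 'b) \<Rightarrow> 'a graph \<Rightarrow> 'b graph" where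
  "gmap h G = (h ` fst G, map_prod h h ` snd G)"

context
  fixes h :: "'a \<Rightarrow> 'b" assumes h: "inj h"
begin

lemma mem_gmap: "h v \<in> fst (gmap h G) \<longleftrightarrow> v \<in> fst G"
  unfolding gmap_def by (auto simp: inj_eq[OF h])

lemma indeg_gmap: "indeg (gmap h G) (h v) = indeg G v"
proof -
  have "parents (gmap h G) (h v) = h ` parents G v"
    unfolding parents_def gmap_def by (auto simp: inj_eq[OF h])
  then show ?thesis
    unfolding indeg_eq_card_parents by (simp add: card_image inj_on_subset[OF h])
qed

lemma outdeg_gmap: "outdeg (gmap h G) (h v) = outdeg G v"
proof -
  have "children (gmap h G) (h v) = h ` children G v"
    unfolding children_def gmap_def by (auto simp: inj_eq[OF h])
  then show ?thesis
    unfolding outdeg_eq_card_children by (simp add: card_image inj_on_subset[OF h])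
qed

lemma node_kinds_gmap:
  "is_root (gmap h G) (h v) = is_root G v" "is_tree_node (gmap h G) (h v) = is_tree_node G v"
  "is_reticulation (gmap h G) (h v) = is_reticulation G v" "is_leaf (gmap h G) (h v) = is_leaf G v"
  unfolding is_root_def is_tree_node_def is_reticulation_def is_leaf_def
  by (simp_all add: mem_gmap indeg_gmap outdeg_gmap)

lemma acyclic_map_prod: "acyclic E \<Longrightarrow> acyclic (map_prod h h ` E)"
proof -
  have "(a, b) \<in> (map_prod h h ` E)\<^sup>+ \<Longrightarrow> \<exists>x y. a = h x \<and> b = h y \<and> (x, y) \<in> E\<^sup>+" for a b
  proof (induction rule: trancl_induct)
    case (step b c)
    then show ?case by (auto simp: inj_eq[OF h] intro: trancl_into_trancl)
  qed auto
  then show "acyclic E \<Longrightarrow> acyclic (map_prod h h ` E)"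
    unfolding acyclic_def by (metis inj_eq[OF h])
qed

lemma gmap_vertexE: "z \<in> fst (gmap h G) \<Longrightarrow> (\<And>v. v \<in> fst G \<Longrightarrow> z = h v \<Longrightarrow> P) \<Longrightarrow> P"
  unfolding gmap_def by auto

lemma network_gmap:
  assumes N: "network G" shows "network (gmap h G)"
proof -
  obtain r where r: "is_root G r" "\<And>r'. is_root G r' \<Longrightarrow> r' = r" using N unfolding network_def by blast
  have "\<exists>!r. is_root (gmap h G) r"
  proof (rule ex1I[of _ "h r"])
    show "is_root (gmap h G) (h r)" using r(1) by (simp add: node_kinds_gmap)
    fix z assume z: "is_root (gmap h G) z"
    then have "z \<in> fst (gmap h G)" unfolding is_root_def by simp
    then show "z = h r" by (rule gmap_vertexE) (use z r(2) in \<open>auto simp: node_kinds_gmap\<close>)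
  qed
  moreover have "is_root (gmap h G) z \<or> is_tree_node (gmap h G) z
      \<or> is_reticulation (gmap h G) z \<or> is_leaf (gmap h G) z" if "z \<in> fst (gmap h G)" for z
    using that by (rule gmap_vertexE) (use N in \<open>auto simp: node_kinds_gmap network_def\<close>)
  moreover have "finite (fst (gmap h G))" "snd (gmap h G) \<subseteq> fst (gmap h G) \<times> fst (gmap h G)"
    "acyclic (snd (gmap h G))"
    using N acyclic_map_prod unfolding network_def gmap_def by auto
  ultimately show ?thesis unfolding network_def by blast
qed

lemma binary_gmap: "binary G \<Longrightarrow> binary (gmap h G)"
  unfolding binary_def
  by (auto elim!: gmap_vertexE simp: node_kinds_gmap indeg_gmap outdeg_gmap)

lemma is_tree_gmap: "is_tree G \<Longrightarrow> is_tree (gmap h G)"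
  unfolding is_tree_def
  by (auto simp: network_gmap is_reticulation_def indeg_gmap outdeg_gmap elim!: gmap_vertexE)

lemma leaves_gmap: "leaves (gmap h G) = h ` leaves G"
  unfolding leaves_def by (auto simp: gmap_def node_kinds_gmap[unfolded gmap_def])

end

text \<open>If every attachment point carries a linking arc, step (iii) suppresses nothing and the
  isomorphism onto N is \<open>projl\<close>.\<close>

lemma tree_based_withI:
  fixes N :: "'v graph" and T :: "('v + nat) graph"
  assumes N: "network N" "binary N" and T: "is_tree T" "binary T" "leaves T = Inl ` leaves N"
    and P: "valid_subdivision T P"
    and L: "L \<subseteq> attachment_points T P \<times> attachment_points T P" "L \<inter> snd (subdivide T P) = {}"
    and glued: "(fst (subdivide T P), snd (subdivide T P) \<union> L) = gmap Inl N"
    and linked: "attachment_points T P \<subseteq> Field L"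
  shows "tree_based_with N T"
proof -
  have inj: "inj (Inl :: 'v \<Rightarrow> 'v + nat)" by simp
  let ?G = "gmap Inl N :: ('v + nat) graph"
  have deg: "\<forall>z \<in> fst ?G. indeg ?G z + outdeg ?G z \<le> 3"
  proof
    fix z assume "z \<in> fst ?G"
    then obtain v where "v \<in> fst N" "z = Inl v" by (rule gmap_vertexE[OF inj])
    then show "indeg ?G z + outdeg ?G z \<le> 3"
      using binary_network_degrees[OF N \<open>v \<in> fst N\<close>] by (auto simp: indeg_gmap outdeg_gmap)
  qed
  have acyclic: "acyclic (snd ?G)"
    using acyclic_map_prod[OF inj network_acyclic[OF N(1)]] by (simp add: gmap_def)
  have unlinked: "{a \<in> attachment_points T P. \<forall>b. (a, b) \<notin> L \<and> (b, a) \<notin> L} = set []"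
    using linked unfolding Field_def by auto
  have iso: "bij_betw projl (fst ?G) (fst N)"
    "\<forall>a \<in> fst ?G. \<forall>b \<in> fst ?G. (a, b) \<in> snd ?G \<longleftrightarrow> (projl a, projl b) \<in> snd N"
    unfolding gmap_def by (auto simp: bij_betw_def inj_on_def image_iff) force
  show ?thesis
    unfolding tree_based_with_def
    using T P L deg acyclic unlinked iso
    by (intro conjI exI[of _ P] exI[of _ L] exI[of _ "[]"] exI[of _ projl])
      (simp_all only: Let_def glued, auto)
qed

section \<open>The base tree of an admissible set of linking arcs\<close>

locale admissible_network =
  fixes N :: "'v graph" and L :: "('v \<times> 'v) set"
  assumes network: "network N" and binary: "binary N" and admissible: "admissible N L"
begin

definition base_arcs :: "('v \<times> 'v) set" where
  "base_arcs = snd N - L"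

definition attachments :: "'v set" where
  "attachments = Field L"

lemma attachments_subset: "attachments \<subseteq> fst N"
  using admissible_arcs[OF admissible] network_finite_graph[OF network]
  unfolding attachments_def Field_def finite_graph_def by blast

lemma base_arcs_subset: "base_arcs \<subseteq> snd N"
  unfolding base_arcs_def by blast

lemma base_arc_vertices: "(u, v) \<in> base_arcs \<Longrightarrow> u \<in> fst N \<and> v \<in> fst N"
  using base_arcs_subset network_finite_graph[OF network] unfolding finite_graph_def by blast

lemma acyclic_base_arcs: "acyclic base_arcs"
  using acyclic_subset[OF network_acyclic[OF network] base_arcs_subset] .

lemma wf_base_arcs: "wf base_arcs" "wf (base_arcs\<inverse>)"
  using finite_subset[OF base_arcs_subset finite_graph_finite_arcs[OF network_finite_graph[OF network]]]
  by (simp_all add: acyclic_base_arcs finite_acyclic_wf finite_acyclic_wf_converse)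

lemma base_arcs_from_unattached: "v \<notin> attachments \<Longrightarrow> (v, w) \<in> base_arcs \<longleftrightarrow> (v, w) \<in> snd N"
  unfolding base_arcs_def attachments_def Field_def by blast

lemma reticulation_attached: "v \<in> fst N \<Longrightarrow> 2 \<le> indeg N v \<Longrightarrow> v \<in> attachments"
  using ex1_implies_ex[OF admissible_reticulation[OF admissible]] unfolding attachments_def Field_def
  by blast

lemma attachment_degrees:
  assumes "a \<in> attachments"
  shows "indeg N a = 2 \<and> outdeg N a = 1 \<or> indeg N a = 1 \<and> outdeg N a = 2"
proof -
  have "a \<in> fst N" using assms attachments_subset by blast
  from assms obtain w where "(w, a) \<in> L \<or> (a, w) \<in> L"
    unfolding attachments_def Field_def by blast
  then have "2 \<le> indeg N a \<or> 2 \<le> outdeg N a" using admissible_link[OF admissible] by blast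
  with binary_network_indeg_ge2[OF network binary \<open>a \<in> fst N\<close>]
    binary_network_outdeg_ge2[OF network binary \<open>a \<in> fst N\<close>]
  show ?thesis by auto
qed

lemma unique_base_parent:
  assumes "v \<in> fst N" "indeg N v \<noteq> 0" shows "\<exists>!u. (u, v) \<in> base_arcs"
proof -
  have base: "(u, v) \<in> base_arcs \<longleftrightarrow> u \<in> parents N v \<and> (u, v) \<notin> L" for u
    unfolding base_arcs_def parents_def by blast
  consider "indeg N v = 1" | "indeg N v = 2"
    using binary_network_degrees[OF network binary assms(1)] assms(2) by auto
  then show ?thesis
  proof cases
    case 1
    then have "card (parents N v) = 1" by (simp add: indeg_eq_card_parents)
    then obtain u where "parents N v = {u}" by (rule card_1_singletonE)
    moreover have "(u, v) \<notin> L" using admissible_link(1)[OF admissible, of u v] 1 by auto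
    ultimately show ?thesis unfolding base by (intro ex1I[of _ u]) auto
  next
    case 2
    then obtain w where w: "(w, v) \<in> L" "\<And>w'. (w', v) \<in> L \<Longrightarrow> w' = w"
      using admissible_reticulation[OF admissible assms(1)] by auto
    have "card (parents N v) = 2" using 2 by (simp add: indeg_eq_card_parents)
    moreover have "w \<in> parents N v" using w(1) admissible_arcs[OF admissible] unfolding parents_def by blast
    ultimately obtain u where u: "parents N v = {w, u}" "w \<noteq> u" by (rule card_2_doubletonE)
    show ?thesis
    proof (rule ex1I[of _ u])
      show "(u, v) \<in> base_arcs" using u w(2) unfolding base by blast
      show "u' = u" if "(u', v) \<in> base_arcs" for u' using that u w(1) unfolding base by auto
    qed
  qed
qed

lemma base_parent_unique: "(u, v) \<in> base_arcs \<Longrightarrow> (u', v) \<in> base_arcs \<Longrightarrow> u = u'"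
proof -
  assume uv: "(u, v) \<in> base_arcs" "(u', v) \<in> base_arcs"
  then have "u \<in> parents N v" using base_arcs_subset unfolding parents_def by blast
  then have "indeg N v \<noteq> 0"
    using finite_parents[OF network_finite_graph[OF network]] unfolding indeg_eq_card_parents by auto
  with base_arc_vertices[OF uv(1)] have "\<exists>!u. (u, v) \<in> base_arcs" by (intro unique_base_parent) auto
  with uv show "u = u'" by auto
qed

lemma unique_base_child: "a \<in> attachments \<Longrightarrow> \<exists>!w. (a, w) \<in> base_arcs"
proof -
  assume a: "a \<in> attachments"
  have base: "(a, w) \<in> base_arcs \<longleftrightarrow> w \<in> children N a \<and> (a, w) \<notin> L" for w
    unfolding base_arcs_def children_def by blast
  from a obtain w where "(w, a) \<in> L \<or> (a, w) \<in> L" unfolding attachments_def Field_def by blast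
  then show ?thesis
  proof
    assume "(w, a) \<in> L"
    then have "outdeg N a = 1"
      using admissible_link(1)[OF admissible \<open>(w, a) \<in> L\<close>] attachment_degrees[OF a] by auto
    then have "card (children N a) = 1" by (simp add: outdeg_eq_card_children)
    then obtain u where "children N a = {u}" by (rule card_1_singletonE)
    moreover have "(a, u) \<notin> L" using admissible_link(2)[OF admissible, of a u] \<open>outdeg N a = 1\<close> by auto
    ultimately show ?thesis unfolding base by (intro ex1I[of _ u]) auto
  next
    assume aw: "(a, w) \<in> L"
    then have "outdeg N a = 2" using admissible_link(2)[OF admissible aw] attachment_degrees[OF a] by auto
    then have "card (children N a) = 2" by (simp add: outdeg_eq_card_children)
    moreover have "w \<in> children N a" using aw admissible_arcs[OF admissible] unfolding children_def by blast
    ultimately obtain u where "children N a = {w, u}" "w \<noteq> u" by (rule card_2_doubletonE)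
    moreover have "(a, u) \<notin> L" using admissible_link(3)[OF admissible aw] \<open>w \<noteq> u\<close> by blast
    ultimately show ?thesis using aw unfolding base by (intro ex1I[of _ u]) auto
  qed
qed

text \<open>These paths become the subdivided arcs of the base tree.\<close>

definition attached_path :: "'v \<Rightarrow> 'v list \<Rightarrow> 'v \<Rightarrow> bool" where
  "attached_path c ps v \<longleftrightarrow> c \<notin> attachments \<and> set ps \<subseteq> attachments \<and> path_arcs c ps v \<subseteq> base_arcs"

lemma attached_path_through_arc:
  "(u, v) \<in> base_arcs \<Longrightarrow> \<exists>c ps. attached_path c ps v \<and> (u, v) \<in> path_arcs c ps v"
proof (induction u arbitrary: v rule: wf_induct_rule[OF wf_base_arcs(1)])
  case (1 u)
  show ?case
  proof (cases "u \<in> attachments")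
    case False
    with "1.prems" show ?thesis unfolding attached_path_def by (intro exI[of _ u] exI[of _ "[]"]) simp
  next
    case True
    then have "u \<in> fst N" "indeg N u \<noteq> 0"
      using attachment_degrees[OF True] base_arc_vertices[OF "1.prems"] by auto
    then obtain t where "(t, u) \<in> base_arcs" using ex1_implies_ex[OF unique_base_parent] by blast
    with "1.IH" obtain c ps where "attached_path c ps u" by blast
    with True "1.prems" show ?thesis unfolding attached_path_def
      by (intro exI[of _ c] exI[of _ "ps @ [u]"]) (simp add: path_arcs_snoc)
  qed
qed

lemma attached_path_to:
  assumes "v \<in> fst N" "indeg N v \<noteq> 0" shows "\<exists>c ps. attached_path c ps v"
  using ex1_implies_ex[OF unique_base_parent[OF assms]] attached_path_through_arc by blast

lemma path_from_attachment:
  "a \<in> attachments \<Longrightarrow> \<exists>qs b. b \<notin> attachments \<and> set qs \<subseteq> attachments \<and> path_arcs a qs b \<subseteq> base_arcs"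
proof (induction a rule: wf_induct_rule[OF wf_base_arcs(2)])
  case (1 a)
  obtain w where w: "(a, w) \<in> base_arcs" using ex1_implies_ex[OF unique_base_child[OF "1.prems"]] ..
  show ?case
  proof (cases "w \<in> attachments")
    case False
    with w show ?thesis by (intro exI[of _ "[]"] exI[of _ w]) simp
  next
    case True
    with w "1.IH" obtain qs b
      where "b \<notin> attachments" "set qs \<subseteq> attachments" "path_arcs w qs b \<subseteq> base_arcs"
      by blast
    with True w show ?thesis by (intro exI[of _ "w # qs"] exI[of _ b]) simp
  qed
qed

lemma attached_path_unique:
  "attached_path c ps v \<Longrightarrow> attached_path c' ps' v \<Longrightarrow> c = c' \<and> ps = ps'"
proof (induction ps arbitrary: v ps' rule: rev_induct)
  case Nil
  then have "(c, v) \<in> base_arcs" "c \<notin> attachments" unfolding attached_path_def by auto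
  with Nil.prems(2) show ?case unfolding attached_path_def
    by (cases ps' rule: rev_exhaust) (auto simp: path_arcs_snoc dest: base_parent_unique)
next
  case (snoc x xs)
  then have "(x, v) \<in> base_arcs" "x \<in> attachments" "attached_path c xs x"
    unfolding attached_path_def by (auto simp: path_arcs_snoc)
  with snoc.prems(2) snoc.IH show ?case unfolding attached_path_def
    by (cases ps' rule: rev_exhaust) (auto simp: path_arcs_snoc dest: base_parent_unique)
qed

lemma base_child_unique:
  "a \<in> attachments \<Longrightarrow> (a, w) \<in> base_arcs \<Longrightarrow> (a, w') \<in> base_arcs \<Longrightarrow> w = w'"
  using unique_base_child by blast

lemma path_from_attachment_unique:
  "a \<in> attachments \<Longrightarrow> path_arcs a qs b \<subseteq> base_arcs \<Longrightarrow> path_arcs a qs' b' \<subseteq> base_arcs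
    \<Longrightarrow> set qs \<subseteq> attachments \<Longrightarrow> set qs' \<subseteq> attachments \<Longrightarrow> b \<notin> attachments \<Longrightarrow> b' \<notin> attachments
    \<Longrightarrow> qs = qs' \<and> b = b'"
proof (induction qs arbitrary: a qs')
  case Nil
  then show ?case by (cases qs') (auto dest: base_child_unique)
next
  case (Cons q qs)
  then show ?case by (cases qs') (auto dest: base_child_unique)
qed

definition tree_arcs :: "('v \<times> 'v) set" where
  "tree_arcs = {(c, b). b \<notin> attachments \<and> (\<exists>ps. attached_path c ps b)}"

definition tree_path :: "'v \<times> 'v \<Rightarrow> 'v list" where
  "tree_path e = (THE ps. attached_path (fst e) ps (snd e))"

lemma tree_arcsI:
  assumes "attached_path c ps b" "b \<notin> attachments"
  shows "(c, b) \<in> tree_arcs" "tree_path (c, b) = ps"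
  using assms unfolding tree_arcs_def tree_path_def
  by (auto intro!: the_equality dest: attached_path_unique)

lemma tree_arcsD:
  assumes "(c, b) \<in> tree_arcs" shows "b \<notin> attachments" "attached_path c (tree_path (c, b)) b"
  using assms tree_arcsI(2) unfolding tree_arcs_def by auto

lemma tree_arc_vertices: "(c, b) \<in> tree_arcs \<Longrightarrow> c \<in> fst N - attachments \<and> b \<in> fst N - attachments"
  using tree_arcsD[of c b] path_arcs_first[of c _ b] path_arcs_last[of c _ b] base_arc_vertices
  unfolding attached_path_def by blast

lemma tree_arc_through_attachment:
  assumes "attached_path c ps a" "a \<in> attachments"
  obtains qs b where "(c, b) \<in> tree_arcs" "tree_path (c, b) = ps @ a # qs"
proof -
  obtain qs b where "b \<notin> attachments" "set qs \<subseteq> attachments" "path_arcs a qs b \<subseteq> base_arcs"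
    using path_from_attachment[OF assms(2)] by blast
  with assms have "attached_path c (ps @ a # qs) b" "b \<notin> attachments"
    unfolding attached_path_def by (auto simp: path_arcs_append)
  then show ?thesis using that tree_arcsI by blast
qed

lemma distinct_tree_path: "e \<in> tree_arcs \<Longrightarrow> distinct (tree_path e)"
proof -
  assume "e \<in> tree_arcs"
  moreover obtain c b where "e = (c, b)" by fastforce
  ultimately have "path_arcs c (tree_path e) b \<subseteq> base_arcs"
    using tree_arcsD(2) unfolding attached_path_def by blast
  then show ?thesis using distinct_path[OF acyclic_base_arcs] by fastforce
qed

lemma tree_paths_cover_attachments: "(\<Union>e \<in> tree_arcs. set (tree_path e)) = attachments"
proof
  show "(\<Union>e \<in> tree_arcs. set (tree_path e)) \<subseteq> attachments"
    using tree_arcsD(2) unfolding attached_path_def by fastforce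
  show "attachments \<subseteq> (\<Union>e \<in> tree_arcs. set (tree_path e))"
  proof
    fix a assume a: "a \<in> attachments"
    then have "a \<in> fst N" "indeg N a \<noteq> 0" using attachment_degrees[OF a] base_arc_vertices
      ex1_implies_ex[OF unique_base_child[OF a]] by auto
    then obtain c ps where "attached_path c ps a" using attached_path_to by blast
    from tree_arc_through_attachment[OF this a] show "a \<in> (\<Union>e \<in> tree_arcs. set (tree_path e))"
      by (metis UN_iff in_set_conv_decomp)
  qed
qed

lemma tree_paths_cover_base_arcs:
  "(\<Union>e \<in> tree_arcs. path_arcs (fst e) (tree_path e) (snd e)) = base_arcs"
proof
  show "(\<Union>e \<in> tree_arcs. path_arcs (fst e) (tree_path e) (snd e)) \<subseteq> base_arcs"
    using tree_arcsD(2) unfolding attached_path_def by fastforce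
  show "base_arcs \<subseteq> (\<Union>e \<in> tree_arcs. path_arcs (fst e) (tree_path e) (snd e))"
  proof
    fix e assume "e \<in> base_arcs"
    then obtain u v where e: "e = (u, v)" "(u, v) \<in> base_arcs" by (cases e) auto
    then obtain c ps where P: "attached_path c ps v" "(u, v) \<in> path_arcs c ps v"
      using attached_path_through_arc by blast
    show "e \<in> (\<Union>e \<in> tree_arcs. path_arcs (fst e) (tree_path e) (snd e))"
    proof (cases "v \<in> attachments")
      case False
      with P e(1) tree_arcsI[OF P(1)] show ?thesis by force
    next
      case True
      then obtain qs b where "(c, b) \<in> tree_arcs" "tree_path (c, b) = ps @ v # qs"
        using tree_arc_through_attachment[OF P(1)] by blast
      with P(2) e(1) show ?thesis by (force simp: path_arcs_append)
    qed
  qed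
qed

lemma tree_paths_disjoint:
  assumes "e \<in> tree_arcs" "e' \<in> tree_arcs" "e \<noteq> e'"
  shows "set (tree_path e) \<inter> set (tree_path e') = {}"
proof (rule ccontr)
  obtain c b c' b' where e: "e = (c, b)" "e' = (c', b')" by fastforce
  assume "set (tree_path e) \<inter> set (tree_path e') \<noteq> {}"
  then obtain a xs ys xs' ys' where a: "tree_path e = xs @ a # ys" "tree_path e' = xs' @ a # ys'"
    by (metis disjoint_iff split_list)
  have P: "attached_path c (xs @ a # ys) b" "attached_path c' (xs' @ a # ys') b'"
    using tree_arcsD(2) assms(1,2) a e by fastforce+
  then have "a \<in> attachments" "b \<notin> attachments" "b' \<notin> attachments"
    using tree_arcsD(1) assms e unfolding attached_path_def by auto
  with P path_from_attachment_unique[of a ys b ys' b'] have "b = b'"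
    unfolding attached_path_def by (simp add: path_arcs_append)
  moreover from P have "attached_path c xs a" "attached_path c' xs' a"
    unfolding attached_path_def by (auto simp: path_arcs_append)
  then have "c = c'" by (auto dest: attached_path_unique)
  ultimately show False using assms(3) e by simp
qed

definition base_tree :: "'v graph" where
  "base_tree = (fst N - attachments, tree_arcs)"

lemma finite_graph_base_tree: "finite_graph base_tree"
proof -
  have "tree_arcs \<subseteq> (fst N - attachments) \<times> (fst N - attachments)"
    using tree_arc_vertices by auto
  with network_finite_graph[OF network] show ?thesis
    unfolding base_tree_def finite_graph_def by simp
qed

lemma acyclic_base_tree: "acyclic (snd base_tree)"
proof (rule acyclic_subset_trancl[OF acyclic_base_arcs], rule subsetI)
  fix e assume "e \<in> snd base_tree"
  moreover obtain c b where "e = (c, b)" by fastforce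
  ultimately have e: "e = (c, b)" "(c, b) \<in> tree_arcs" unfolding base_tree_def by auto
  then have "path_arcs c (tree_path (c, b)) b \<subseteq> base_arcs"
    using tree_arcsD(2) unfolding attached_path_def by blast
  from path_arcs_trancl[OF this] show "e \<in> base_arcs\<^sup>+" using e(1) by simp
qed

lemma indeg_base_tree:
  assumes b: "b \<in> fst base_tree" shows "indeg base_tree b = indeg N b"
proof -
  have b': "b \<in> fst N" "b \<notin> attachments" using b unfolding base_tree_def by auto
  have par: "parents base_tree b = {c. \<exists>ps. attached_path c ps b}"
    using b'(2) unfolding parents_def base_tree_def tree_arcs_def by auto
  show ?thesis
  proof (cases "indeg N b = 0")
    case True
    have "\<not> attached_path c ps b" for c ps
    proof
      assume "attached_path c ps b"
      then have "(last (c # ps), b) \<in> base_arcs"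
        using path_arcs_last[of c ps b] unfolding attached_path_def by blast
      then have "last (c # ps) \<in> parents N b" using base_arcs_subset unfolding parents_def by blast
      with True finite_parents[OF network_finite_graph[OF network]] show False
        unfolding indeg_eq_card_parents by auto
    qed
    with True show ?thesis unfolding indeg_eq_card_parents par by simp
  next
    case False
    moreover have "\<not> 2 \<le> indeg N b" using reticulation_attached[OF b'(1)] b'(2) by blast
    ultimately have "indeg N b = 1" using binary_network_degrees[OF network binary b'(1)] by auto
    moreover obtain c ps where "attached_path c ps b" using attached_path_to b'(1) False by blast
    then have "parents base_tree b = {c}" unfolding par by (auto dest: attached_path_unique)
    ultimately show ?thesis unfolding indeg_eq_card_parents by simp
  qed
qed

text \<open>A tree arc leaving c is determined by the first arc of its subdivision path.\<close>

definition first_step :: "'v \<Rightarrow> 'v \<Rightarrow> 'v" where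
  "first_step c b = hd (tree_path (c, b) @ [b])"

lemma first_step_cases:
  assumes "(c, b) \<in> tree_arcs"
  obtains "tree_path (c, b) = []" "first_step c b = b" "first_step c b \<notin> attachments"
  | qs where "tree_path (c, b) = first_step c b # qs" "first_step c b \<in> attachments"
      "set qs \<subseteq> attachments" "path_arcs (first_step c b) qs b \<subseteq> base_arcs"
  using tree_arcsD[OF assms] unfolding first_step_def attached_path_def
  by (cases "tree_path (c, b)") auto

lemma children_base_tree: "b \<in> children base_tree c \<longleftrightarrow> (c, b) \<in> tree_arcs"
  unfolding base_tree_def children_def by simp

lemma inj_on_first_step: "inj_on (first_step c) (children base_tree c)"
proof (rule inj_onI)
  fix b1 b2
  assume "b1 \<in> children base_tree c" "b2 \<in> children base_tree c"
    and eq: "first_step c b1 = first_step c b2"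
  then have b: "(c, b1) \<in> tree_arcs" "(c, b2) \<in> tree_arcs" unfolding children_base_tree by simp_all
  show "b1 = b2"
  proof (cases rule: first_step_cases[OF b(1)])
    case 1
    with eq show ?thesis by (cases rule: first_step_cases[OF b(2)]) simp_all
  next
    case (2 qs1)
    then show ?thesis
    proof (cases rule: first_step_cases[OF b(2)])
      case (2 qs2)
      with eq have "path_arcs (first_step c b1) qs2 b2 \<subseteq> base_arcs" by simp
      from path_from_attachment_unique[OF \<open>first_step c b1 \<in> attachments\<close>
          \<open>path_arcs (first_step c b1) qs1 b1 \<subseteq> base_arcs\<close> this
          \<open>set qs1 \<subseteq> attachments\<close> \<open>set qs2 \<subseteq> attachments\<close> tree_arcsD(1)[OF b(1)] tree_arcsD(1)[OF b(2)]]
      show ?thesis by simp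
    qed (use eq \<open>first_step c b1 \<in> attachments\<close> in simp)
  qed
qed

lemma first_step_image:
  assumes "c \<in> fst base_tree" shows "first_step c ` children base_tree c = children N c"
proof (intro equalityI subsetI)
  fix w assume "w \<in> first_step c ` children base_tree c"
  then obtain b where b: "(c, b) \<in> tree_arcs" "w = first_step c b" by (auto simp: children_base_tree)
  have "(c, w) \<in> base_arcs"
    using tree_arcsD(2)[OF b(1)] path_arcs_first[of c "tree_path (c, b)" b] b(2)
    unfolding first_step_def attached_path_def by blast
  then show "w \<in> children N c" using base_arcs_subset unfolding children_def by blast
next
  have c: "c \<notin> attachments" using assms unfolding base_tree_def by simp
  fix w assume "w \<in> children N c"
  then have path: "attached_path c [] w"
    using base_arcs_from_unattached[OF c] c unfolding attached_path_def children_def by simp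
  show "w \<in> first_step c ` children base_tree c"
  proof (cases "w \<in> attachments")
    case False
    with tree_arcsI[OF path] show ?thesis
      unfolding first_step_def by (intro image_eqI[of _ _ w]) (simp_all add: children_base_tree)
  next
    case True
    then obtain qs b where "(c, b) \<in> tree_arcs" "tree_path (c, b) = [] @ w # qs"
      by (rule tree_arc_through_attachment[OF path])
    then show ?thesis
      unfolding first_step_def by (intro image_eqI[of _ _ b]) (simp_all add: children_base_tree)
  qed
qed

lemma outdeg_base_tree: "c \<in> fst base_tree \<Longrightarrow> outdeg base_tree c = outdeg N c"
  unfolding outdeg_eq_card_children
  using bij_betw_same_card[OF bij_betw_imageI[OF inj_on_first_step first_step_image]] .

lemma is_tree_base_tree: "is_tree base_tree \<and> binary base_tree"
proof -
  have "network base_tree \<and> binary base_tree"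
  proof (rule network_binary_if_degrees_kept[OF network binary finite_graph_base_tree acyclic_base_tree])
    show "fst base_tree \<subseteq> fst N" unfolding base_tree_def by auto
    show "v \<in> fst base_tree \<Longrightarrow> indeg base_tree v = indeg N v \<and> outdeg base_tree v = outdeg N v" for v
      using indeg_base_tree outdeg_base_tree by simp
    show "r \<in> fst base_tree" if "is_root N r" for r
    proof -
      have "r \<notin> attachments" using that attachment_degrees[of r] unfolding is_root_def by auto
      with that show ?thesis unfolding is_root_def base_tree_def by simp
    qed
  qed
  moreover have "\<not> is_reticulation base_tree v" for v
  proof
    assume v: "is_reticulation base_tree v"
    then have "v \<in> fst N - attachments" "2 \<le> indeg N v"
      using indeg_base_tree[of v] unfolding is_reticulation_def base_tree_def by auto
    with reticulation_attached show False by blast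
  qed
  ultimately show ?thesis unfolding is_tree_def by blast
qed

lemma leaves_base_tree: "leaves base_tree = leaves N"
proof -
  have "v \<notin> attachments" if "is_leaf N v" for v
    using that attachment_degrees[of v] unfolding is_leaf_def by auto
  then show ?thesis
    using indeg_base_tree outdeg_base_tree
    unfolding leaves_def is_leaf_def base_tree_def by auto
qed

definition embedded_base_tree :: "('v + nat) graph" where
  "embedded_base_tree = gmap Inl base_tree"

definition subdivision :: "('v + nat) \<times> ('v + nat) \<Rightarrow> ('v + nat) list" where
  "subdivision e = map Inl (tree_path (projl (fst e), projl (snd e)))"

lemma arcs_embedded_base_tree:
  "e \<in> snd embedded_base_tree \<longleftrightarrow> (\<exists>c b. e = (Inl c, Inl b) \<and> (c, b) \<in> tree_arcs)"
  unfolding embedded_base_tree_def gmap_def base_tree_def by auto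

lemma valid_subdivision_base_tree: "valid_subdivision embedded_base_tree subdivision"
  unfolding valid_subdivision_def
proof (intro conjI ballI impI)
  fix e assume "e \<in> snd embedded_base_tree"
  then obtain c b where e: "e = (Inl c, Inl b)" "(c, b) \<in> tree_arcs"
    unfolding arcs_embedded_base_tree by blast
  then have "distinct (tree_path (c, b))" "set (tree_path (c, b)) \<subseteq> attachments"
    using distinct_tree_path tree_paths_cover_attachments by blast+
  then show "distinct (subdivision e)" "set (subdivision e) \<inter> fst embedded_base_tree = {}"
    unfolding e(1) subdivision_def by (auto simp: distinct_map embedded_base_tree_def gmap_def base_tree_def)
next
  fix e e' assume "e \<in> snd embedded_base_tree" "e' \<in> snd embedded_base_tree" "e \<noteq> e'"
  then obtain c b c' b' where "e = (Inl c, Inl b)" "e' = (Inl c', Inl b')"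
    "(c, b) \<in> tree_arcs" "(c', b') \<in> tree_arcs" "(c, b) \<noteq> (c', b')"
    unfolding arcs_embedded_base_tree by blast
  with tree_paths_disjoint[of "(c, b)" "(c', b')"] show "set (subdivision e) \<inter> set (subdivision e') = {}"
    unfolding subdivision_def by auto
qed

lemma attachment_points_base_tree:
  "attachment_points embedded_base_tree subdivision = Inl ` attachments"
proof -
  have "attachment_points embedded_base_tree subdivision = (\<Union>e \<in> tree_arcs. Inl ` set (tree_path e))"
    unfolding attachment_points_def embedded_base_tree_def gmap_def base_tree_def subdivision_def by auto
  also have "\<dots> = Inl ` (\<Union>e \<in> tree_arcs. set (tree_path e))" by blast
  finally show ?thesis unfolding tree_paths_cover_attachments .
qed

lemma subdivide_base_tree: "subdivide embedded_base_tree subdivision = gmap Inl (fst N, base_arcs)"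
proof (rule prod_eqI)
  have "fst (subdivide embedded_base_tree subdivision) = Inl ` (fst N - attachments) \<union> Inl ` attachments"
    unfolding subdivide_def attachment_points_base_tree
    by (simp add: embedded_base_tree_def gmap_def base_tree_def)
  also have "\<dots> = Inl ` fst N" using attachments_subset by blast
  finally show "fst (subdivide embedded_base_tree subdivision) = fst (gmap Inl (fst N, base_arcs))"
    by (simp add: gmap_def)
  have "snd (subdivide embedded_base_tree subdivision)
      = (\<Union>e \<in> tree_arcs. map_prod Inl Inl ` path_arcs (fst e) (tree_path e) (snd e))"
    unfolding subdivide_def embedded_base_tree_def gmap_def base_tree_def subdivision_def
    by (auto simp: path_arcs_map[symmetric])
  also have "\<dots> = map_prod Inl Inl ` base_arcs"
    unfolding tree_paths_cover_base_arcs[symmetric] by blast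
  finally show "snd (subdivide embedded_base_tree subdivision) = snd (gmap Inl (fst N, base_arcs))"
    by (simp add: gmap_def)
qed

lemma tree_based: "tree_based N"
proof -
  let ?L = "map_prod Inl Inl ` L :: (('v + nat) \<times> ('v + nat)) set"
  have "tree_based_with N embedded_base_tree"
  proof (rule tree_based_withI[OF network binary _ _ _ valid_subdivision_base_tree])
    show "is_tree embedded_base_tree" "binary embedded_base_tree"
      using is_tree_base_tree unfolding embedded_base_tree_def by (simp_all add: is_tree_gmap binary_gmap)
    show "leaves embedded_base_tree = Inl ` leaves N"
      unfolding embedded_base_tree_def by (simp add: leaves_gmap leaves_base_tree)
    show "?L \<subseteq> attachment_points embedded_base_tree subdivision
        \<times> attachment_points embedded_base_tree subdivision"
      "attachment_points embedded_base_tree subdivision \<subseteq> Field ?L"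
      unfolding attachment_points_base_tree attachments_def Field_def by auto
    show "?L \<inter> snd (subdivide embedded_base_tree subdivision) = {}"
      unfolding subdivide_base_tree by (auto simp: gmap_def base_arcs_def)
    show "(fst (subdivide embedded_base_tree subdivision),
        snd (subdivide embedded_base_tree subdivision) \<union> ?L) = gmap Inl N"
      using admissible_arcs[OF admissible]
      unfolding subdivide_base_tree by (auto simp: gmap_def base_arcs_def)
  qed
  with network binary show ?thesis unfolding tree_based_def by blast
qed

end

theorem mainTheorem6:
  fixes N :: "'v graph"
  assumes "network N" and "binary N" and "orchard N"
  shows "tree_based N"
proof -
  obtain L where "admissible N L" using orchard_admissible[OF assms] by blast
  with assms(1,2) interpret admissible_network N L by unfold_locales
  show ?thesis by (rule tree_based)
qed

end
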